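(* Let $a>0$. Then the function $$[0,1]\ni x\mapsto\bigl[\sinh(a)\cos(a)+\cosh(a)\sin(a)\bigr]\cosh(ax)\cos(ax)-\bigl[\sinh(a)\cos(a)-\cosh(a)\sin(a)\bigr]\sinh(ax)\sin(ax)$$ attains its maximum on $[0,1]$ at $x=1$. *)

theory Defs
  imports Complex_Main
begin

end

theory Submission
  imports Defs
begin

text \<open>With \<open>u = a(1 + x)\<close> and \<open>v = a(1 - x)\<close>, product-to-sum formulas give
  \<open>2 f(x) = sinh u cos v + sinh v cos u + cosh u sin v + cosh v sin u\<close>; at \<open>x = 1\<close>
  (so \<open>v = 0\<close>) this is \<open>sinh (u + v) + sin (u + v)\<close>. The difference of the two expressions
  factors as \<open>(sinh u - sin u)(cosh v - cos v) + (cosh u - cos u)(sinh v - sin v)\<close>,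
  and each factor is nonnegative for \<open>u, v \<ge> 0\<close>.\<close>

lemma sin_le_sinh_real:
  fixes t :: real
  assumes "0 \<le> t"
  shows "sin t \<le> sinh t"
proof -
  have "t \<le> sinh t"
    using real_le_x_sinh[OF assms] by (simp add: sinh_field_def exp_minus)
  with sin_x_le_x[OF assms] show ?thesis by linarith
qed

lemma cos_le_cosh_real: "cos (t :: real) \<le> cosh t"
  using cosh_real_ge_1[of t] cos_le_one[of t] by linarith

lemma sinh_plus_sin_add_minus_mixed_eq:
  fixes u v :: real
  shows "sinh (u + v) + sin (u + v)
           - (sinh u * cos v + sinh v * cos u + cosh u * sin v + cosh v * sin u)
         = (sinh u - sin u) * (cosh v - cos v) + (cosh u - cos u) * (sinh v - sin v)"
  by (simp add: sinh_add sin_add algebra_simps)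

lemma mixed_le_sinh_plus_sin_add:
  fixes u v :: real
  assumes "0 \<le> u" "0 \<le> v"
  shows "sinh u * cos v + sinh v * cos u + cosh u * sin v + cosh v * sin u
         \<le> sinh (u + v) + sin (u + v)"
proof -
  have "0 \<le> (sinh u - sin u) * (cosh v - cos v) + (cosh u - cos u) * (sinh v - sin v)"
    using sin_le_sinh_real[OF assms(1)] sin_le_sinh_real[OF assms(2)]
      cos_le_cosh_real[of u] cos_le_cosh_real[of v]
    by (intro add_nonneg_nonneg mult_nonneg_nonneg) auto
  then show ?thesis
    using sinh_plus_sin_add_minus_mixed_eq[of u v] by linarith
qed

lemma double_cosh_cos_sinh_sin_combination_eq:
  fixes a b :: real
  shows "2 * ((sinh a * cos a + cosh a * sin a) * cosh b * cos b
              - (sinh a * cos a - cosh a * sin a) * sinh b * sin b)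
         = sinh (a + b) * cos (a - b) + sinh (a - b) * cos (a + b)
           + cosh (a + b) * sin (a - b) + cosh (a - b) * sin (a + b)"
  by (simp add: sinh_add sinh_diff cosh_add cosh_diff sin_add sin_diff cos_add cos_diff
      algebra_simps)

theorem corollaryC4:
  fixes a :: real
  assumes "a > 0"
  defines "f \<equiv> (\<lambda>x::real.
      (sinh a * cos a + cosh a * sin a) * cosh (a * x) * cos (a * x)
    - (sinh a * cos a - cosh a * sin a) * sinh (a * x) * sin (a * x))"
  shows "\<forall>x\<in>{0..1}. f x \<le> f 1"
proof
  fix x :: real
  assume "x \<in> {0..1}"
  then have arguments_nonneg: "0 \<le> a + a * x" "0 \<le> a - a * x"
    using assms(1) by (auto simp: mult_left_le)
  have "2 * f x = sinh (a + a * x) * cos (a - a * x) + sinh (a - a * x) * cos (a + a * x)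
                  + cosh (a + a * x) * sin (a - a * x) + cosh (a - a * x) * sin (a + a * x)"
    unfolding f_def by (rule double_cosh_cos_sinh_sin_combination_eq)
  also have "\<dots> \<le> sinh ((a + a * x) + (a - a * x)) + sin ((a + a * x) + (a - a * x))"
    by (rule mixed_le_sinh_plus_sin_add[OF arguments_nonneg])
  also have "\<dots> = sinh (a + a) + sin (a + a)"
    by simp
  also have "\<dots> = 2 * f 1"
    using double_cosh_cos_sinh_sin_combination_eq[of a a] by (simp add: f_def)
  finally show "f x \<le> f 1" by simp
qed

end
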